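(* Let $f:[0,1]\to\mathbb{R}$ with $f(0),f(1)\in\mathbb{Z}$, let $n\in\mathbb{N}_+$, $n\ge 2$, and let $\Phi_n:[0,1]\to\mathbb{R}$ satisfy \[ \Phi_n\left(\tfrac{2}{n}\right)-2\Phi_n\left(\tfrac{1}{n}\right)+\Phi_n(0)\ge\frac12\left(2\binom{n}{1}^{-1}+\binom{n}{2}^{-1}\right), \] \[ \Phi_n\left(\tfrac{k+2}{n}\right)-2\Phi_n\left(\tfrac{k+1}{n}\right)+\Phi_n\left(\tfrac{k}{n}\right)\ge\frac12\left(\binom{n}{k}^{-1}+2\binom{n}{k+1}^{-1}+\binom{n}{k+2}^{-1}\right),\quad k=1,\dots,n-3\ (\text{when } n\ge4), \] \[ \Phi_n(1)-2\Phi_n\left(\tfrac{n-1}{n}\right)+\Phi_n\left(\tfrac{n-2}{n}\right)\ge\frac12\left(\binom{n}{n-2}^{-1}+2\binom{n}{n-1}^{-1}\right). \] (a) If $f(x)-\Phi_n(x)$ is convex on $[0,1]$, then $\widehat{B}_n(f)$ is convex on $[0,1]$. (b) If $f(x)+\Phi_n(x)$ is concave on $[0,1]$, then $\widehat{B}_n(f)$ is concave on $[0,1]$.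
   Context: For $n\in\mathbb{N}_+$ and $f:[0,1]\to\mathbb{R}$, $\widehat{B}_n(f)(x):=\sum_{k=0}^n \left\langle f\left(\frac{k}{n}\right)\binom{n}{k}\right\rangle x^k(1-x)^{n-k}$, where $\langle\alpha\rangle$ is the integer nearest to $\alpha$ (when $\alpha$ is a half-integer, $\langle\alpha\rangle$ may be either neighbouring integer, chosen arbitrarily; the result holds for any such choice). *)

theory Defs
  imports "HOL-Analysis.Analysis"
begin

text \<open>A nearest-integer rounding function: any function r with |r a - a| <= 1/2 for all a.
  At half-integers either neighbouring integer may be chosen (arbitrarily).\<close>
definition nearest_int_rounding :: "(real \<Rightarrow> int) \<Rightarrow> bool" where
  "nearest_int_rounding r \<longleftrightarrow> (\<forall>a. \<bar>real_of_int (r a) - a\<bar> \<le> 1/2)"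

definition bhat :: "(real \<Rightarrow> int) \<Rightarrow> nat \<Rightarrow> (real \<Rightarrow> real) \<Rightarrow> real \<Rightarrow> real" where
  "bhat r n f x = (\<Sum>k=0..n. real_of_int (r (f (real k / real n) * real (n choose k)))
                      * x ^ k * (1 - x) ^ (n - k))"

end

theory Submission
  imports Defs
begin

(* With b k = <f (k/n) * (n choose k)> / (n choose k), bhat r n f is the Bernstein polynomial
   with coefficients b, whose second derivative is n (n - 1) times a nonnegative combination of
   the second differences of b; so bhat r n f is convex as soon as these are nonnegative.
   Rounding moves b k away from f (k/n) by at most 1 / (2 (n choose k)), and not at all at the
   endpoints since f 0 and f 1 are integers. The hypotheses on Phi say that the second
   differences of Phi on the grid k/n absorb these errors, so the second differences of b are
   at least those of the convex function f - Phi, which are nonnegative. *)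

lemma has_real_derivative_Bernstein:
  "(Bernstein (Suc m) k has_real_derivative
      real (Suc m) * ((if k = 0 then 0 else Bernstein m (k - 1) x) - Bernstein m k x)) (at x)"
proof (cases k)
  case 0
  show ?thesis unfolding 0 Bernstein_def
    by (rule derivative_eq_intros refl | simp)+
next
  case (Suc j)
  have down: "real (Suc j) * real (Suc m choose Suc j) = real (Suc m) * real (m choose j)"
    by (metis Suc_times_binomial_eq mult.commute of_nat_mult)
  have up: "real (m - j) * real (Suc m choose Suc j) = real (Suc m) * real (m choose Suc j)"
    by (metis binomial_absorb_comp diff_Suc_1 diff_Suc_Suc of_nat_mult)
  have "(Bernstein (Suc m) (Suc j) has_real_derivative
      (real (Suc j) * real (Suc m choose Suc j)) * (x ^ j * (1 - x) ^ (m - j))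
      - (real (m - j) * real (Suc m choose Suc j)) * (x ^ Suc j * (1 - x) ^ (m - Suc j))) (at x)"
    unfolding Bernstein_def
    by (rule derivative_eq_intros refl | simp)+
  then show ?thesis
    unfolding down up Suc Bernstein_def by (simp add: algebra_simps)
qed

(* For n = 0 the truncated n - 1 is harmless: the factor real n vanishes. *)
lemma has_real_derivative_Bernstein_sum:
  "((\<lambda>x. \<Sum>k\<le>n. b k * Bernstein n k x) has_real_derivative
      real n * (\<Sum>k\<le>n - 1. (b (Suc k) - b k) * Bernstein (n - 1) k x)) (at x)"
proof (cases n)
  case 0
  then show ?thesis by (simp add: Bernstein_def)
next
  case (Suc m)
  have "((\<lambda>x. \<Sum>k\<le>Suc m. b k * Bernstein (Suc m) k x) has_real_derivative
      real (Suc m) * ((\<Sum>k\<le>Suc m. b k * (if k = 0 then 0 else Bernstein m (k - 1) x))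
                     - (\<Sum>k\<le>Suc m. b k * Bernstein m k x))) (at x)"
    by (rule derivative_eq_intros has_real_derivative_Bernstein refl)+
       (simp add: sum_distrib_left sum_subtractf algebra_simps)
  also have "(\<Sum>k\<le>Suc m. b k * (if k = 0 then 0 else Bernstein m (k - 1) x))
      = (\<Sum>k\<le>m. b (Suc k) * Bernstein m k x)"
    by (subst sum.atMost_Suc_shift) simp
  also have "(\<Sum>k\<le>Suc m. b k * Bernstein m k x) = (\<Sum>k\<le>m. b k * Bernstein m k x)"
    by (simp add: Bernstein_def)
  finally show ?thesis
    using Suc by (simp add: sum_subtractf left_diff_distrib)
qed

definition second_diff :: "(nat \<Rightarrow> real) \<Rightarrow> nat \<Rightarrow> real" where
  "second_diff b k = b (k + 2) - 2 * b (k + 1) + b k"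

lemma convex_on_Bernstein_sum:
  assumes "\<And>k. k + 2 \<le> n \<Longrightarrow> second_diff b k \<ge> 0"
  shows "convex_on {0..1} (\<lambda>x. \<Sum>k\<le>n. b k * Bernstein n k x)"
proof (rule f''_ge0_imp_convex)
  define db where "db k = b (Suc k) - b k" for k
  define d2b where "d2b k = db (Suc k) - db k" for k
  show "convex {0..1::real}" by simp
  fix x :: real
  show "((\<lambda>x. \<Sum>k\<le>n. b k * Bernstein n k x) has_real_derivative
      real n * (\<Sum>k\<le>n - 1. db k * Bernstein (n - 1) k x)) (at x)"
    unfolding db_def by (rule has_real_derivative_Bernstein_sum)
  show "((\<lambda>x. real n * (\<Sum>k\<le>n - 1. db k * Bernstein (n - 1) k x)) has_real_derivative
      real n * (real (n - 1) * (\<Sum>k\<le>n - 2. d2b k * Bernstein (n - 2) k x))) (at x)"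
    using DERIV_cmult[OF has_real_derivative_Bernstein_sum[where n = "n - 1" and b = db], of "real n"]
    by (simp add: d2b_def numeral_2_eq_2)
  assume x: "x \<in> {0..1}"
  have "0 \<le> (\<Sum>k\<le>n - 2. d2b k * Bernstein (n - 2) k x)" if "2 \<le> n"
  proof (intro sum_nonneg mult_nonneg_nonneg)
    fix k assume "k \<in> {..n - 2}"
    with that have "k + 2 \<le> n" by auto
    from assms[OF this] show "0 \<le> d2b k"
      by (simp add: d2b_def db_def second_diff_def)
  qed (use x Bernstein_nonneg in auto)
  then show "0 \<le> real n * (real (n - 1) * (\<Sum>k\<le>n - 2. d2b k * Bernstein (n - 2) k x))"
    by (cases "2 \<le> n") auto
qed

lemma convex_on_imp_second_diff_nonneg:
  assumes g: "convex_on {0..1} g" and k: "k + 2 \<le> n"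
  shows "0 \<le> second_diff (\<lambda>k. g (real k / real n)) k"
proof -
  have "g ((1 - 1/2) *\<^sub>R (real k / real n) + (1/2) *\<^sub>R (real (k + 2) / real n))
      \<le> (1 - 1/2) * g (real k / real n) + 1/2 * g (real (k + 2) / real n)"
    by (rule convex_onD[OF g]) (use k in auto)
  moreover have "(1 - 1/2) *\<^sub>R (real k / real n) + (1/2) *\<^sub>R (real (k + 2) / real n)
      = real (k + 1) / real n"
    using k by (simp add: field_simps)
  ultimately show ?thesis
    by (simp add: second_diff_def)
qed

lemma concave_on_imp_second_diff_nonpos:
  assumes "concave_on {0..1} g" and "k + 2 \<le> n"
  shows "second_diff (\<lambda>k. g (real k / real n)) k \<le> 0"
  using convex_on_imp_second_diff_nonneg[of "\<lambda>x. - g x", OF _ assms(2)] assms(1)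
  unfolding concave_on_def second_diff_def by simp

lemma concave_on_Bernstein_sum:
  assumes "\<And>k. k + 2 \<le> n \<Longrightarrow> second_diff b k \<le> 0"
  shows "concave_on {0..1} (\<lambda>x. \<Sum>k\<le>n. b k * Bernstein n k x)"
proof -
  have "convex_on {0..1} (\<lambda>x. \<Sum>k\<le>n. - b k * Bernstein n k x)"
  proof (rule convex_on_Bernstein_sum)
    fix k assume "k + 2 \<le> n"
    from assms[OF this] show "0 \<le> second_diff (\<lambda>k. - b k) k"
      by (simp add: second_diff_def)
  qed
  then show ?thesis
    by (simp add: concave_on_def sum_negf)
qed

lemma nearest_int_rounding_Ints:
  assumes r: "nearest_int_rounding r" and a: "a \<in> \<int>"
  shows "real_of_int (r a) = a"
proof -
  obtain z where z: "a = real_of_int z" using a by (auto elim: Ints_cases)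
  have "\<bar>real_of_int (r a - z)\<bar> \<le> 1/2"
    using r z unfolding nearest_int_rounding_def by simp
  then have "r a = z" by linarith
  with z show ?thesis by simp
qed

lemma nearest_int_rounding_scaled_error:
  assumes r: "nearest_int_rounding r" and c: "c > 0"
  shows "\<bar>real_of_int (r (a * c)) / c - a\<bar> \<le> 1 / (2 * c)"
proof -
  have "\<bar>real_of_int (r (a * c)) - a * c\<bar> / c \<le> (1/2) / c"
    using r c unfolding nearest_int_rounding_def by (intro divide_right_mono) auto
  moreover have "real_of_int (r (a * c)) / c - a = (real_of_int (r (a * c)) - a * c) / c"
    using c by (simp add: field_simps)
  ultimately show ?thesis
    using c by (simp add: abs_div)
qed

definition bhat_coeff :: "(real \<Rightarrow> int) \<Rightarrow> nat \<Rightarrow> (real \<Rightarrow> real) \<Rightarrow> nat \<Rightarrow> real" where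
  "bhat_coeff r n f k = real_of_int (r (f (real k / real n) * real (n choose k))) / real (n choose k)"

lemma bhat_eq_Bernstein_sum:
  "bhat r n f = (\<lambda>x. \<Sum>k\<le>n. bhat_coeff r n f k * Bernstein n k x)"
  unfolding bhat_def bhat_coeff_def Bernstein_def atMost_atLeast0
  by (intro ext sum.cong) auto

(* At k = 0 and k = n the coefficient is exact, which is why the hypotheses on Phi at the two
   ends of the grid carry one term fewer. *)
definition rounding_slack :: "nat \<Rightarrow> nat \<Rightarrow> real" where
  "rounding_slack n k = (if k = 0 \<or> k = n then 0 else 1 / (2 * real (n choose k)))"

lemma rounding_slack_endpoints [simp]: "rounding_slack n 0 = 0" "rounding_slack n n = 0"
  by (simp_all add: rounding_slack_def)

lemma rounding_slack_le: "rounding_slack n k \<le> 1 / (2 * real (n choose k))"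
  by (simp add: rounding_slack_def)

lemma bhat_coeff_error:
  assumes r: "nearest_int_rounding r" and f0: "f 0 \<in> \<int>" and f1: "f 1 \<in> \<int>" and k: "k \<le> n"
  shows "\<bar>bhat_coeff r n f k - f (real k / real n)\<bar> \<le> rounding_slack n k"
proof (cases "k = 0 \<or> k = n")
  case True
  then have "f (real k / real n) \<in> \<int>" using f0 f1 by auto
  with True show ?thesis
    by (auto simp: bhat_coeff_def rounding_slack_def nearest_int_rounding_Ints[OF r])
next
  case False
  with nearest_int_rounding_scaled_error[OF r] k show ?thesis
    by (simp add: bhat_coeff_def rounding_slack_def)
qed

lemma bhat_coeff_second_diff_error:
  assumes r: "nearest_int_rounding r" and f0: "f 0 \<in> \<int>" and f1: "f 1 \<in> \<int>" and k: "k + 2 \<le> n"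
  shows "\<bar>second_diff (bhat_coeff r n f) k - second_diff (\<lambda>k. f (real k / real n)) k\<bar>
      \<le> rounding_slack n k + 2 * rounding_slack n (k + 1) + rounding_slack n (k + 2)"
  using bhat_coeff_error[OF r f0 f1, of k n] bhat_coeff_error[OF r f0 f1, of "k + 1" n]
    bhat_coeff_error[OF r f0 f1, of "k + 2" n] k
  unfolding second_diff_def by (simp add: abs_le_iff)

lemma
  assumes r: "nearest_int_rounding r" and f0: "f 0 \<in> \<int>" and f1: "f 1 \<in> \<int>"
    and slack: "\<And>k. k + 2 \<le> n \<Longrightarrow>
      rounding_slack n k + 2 * rounding_slack n (k + 1) + rounding_slack n (k + 2)
        \<le> second_diff (\<lambda>k. \<Phi> (real k / real n)) k"
  shows convex_on_bhat: "convex_on {0..1} (\<lambda>x. f x - \<Phi> x) \<Longrightarrow> convex_on {0..1} (bhat r n f)"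
    and concave_on_bhat: "concave_on {0..1} (\<lambda>x. f x + \<Phi> x) \<Longrightarrow> concave_on {0..1} (bhat r n f)"
proof -
  have error: "\<bar>second_diff (bhat_coeff r n f) k - second_diff (\<lambda>k. f (real k / real n)) k\<bar>
      \<le> second_diff (\<lambda>k. \<Phi> (real k / real n)) k" if "k + 2 \<le> n" for k
    using bhat_coeff_second_diff_error[OF r f0 f1 that] slack[OF that] by linarith
  show "convex_on {0..1} (bhat r n f)" if convex: "convex_on {0..1} (\<lambda>x. f x - \<Phi> x)"
    unfolding bhat_eq_Bernstein_sum
  proof (rule convex_on_Bernstein_sum)
    fix k assume k: "k + 2 \<le> n"
    from convex_on_imp_second_diff_nonneg[OF convex k] error[OF k]
    show "0 \<le> second_diff (bhat_coeff r n f) k"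
      by (simp add: second_diff_def abs_le_iff)
  qed
  show "concave_on {0..1} (bhat r n f)" if concave: "concave_on {0..1} (\<lambda>x. f x + \<Phi> x)"
    unfolding bhat_eq_Bernstein_sum
  proof (rule concave_on_Bernstein_sum)
    fix k assume k: "k + 2 \<le> n"
    from concave_on_imp_second_diff_nonpos[OF concave k] error[OF k]
    show "second_diff (bhat_coeff r n f) k \<le> 0"
      by (simp add: second_diff_def abs_le_iff)
  qed
qed

theorem proposition3p3:
  fixes f \<Phi> :: "real \<Rightarrow> real" and n :: nat and r :: "real \<Rightarrow> int"
  assumes r: "nearest_int_rounding r"
    and f0: "f 0 \<in> \<int>" and f1: "f 1 \<in> \<int>"
    and n: "n \<ge> 2"
    and first: "\<Phi> (2 / real n) - 2 * \<Phi> (1 / real n) + \<Phi> 0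
        \<ge> 1/2 * (2 / real (n choose 1) + 1 / real (n choose 2))"
    and middle: "\<And>k. 1 \<le> k \<Longrightarrow> k \<le> n - 3 \<Longrightarrow>
        \<Phi> (real (k + 2) / real n) - 2 * \<Phi> (real (k + 1) / real n) + \<Phi> (real k / real n)
        \<ge> 1/2 * (1 / real (n choose k) + 2 / real (n choose (k + 1)) + 1 / real (n choose (k + 2)))"
    and last: "\<Phi> 1 - 2 * \<Phi> (real (n - 1) / real n) + \<Phi> (real (n - 2) / real n)
        \<ge> 1/2 * (1 / real (n choose (n - 2)) + 2 / real (n choose (n - 1)))"
  shows "(convex_on {0..1} (\<lambda>x. f x - \<Phi> x) \<longrightarrow> convex_on {0..1} (bhat r n f))
       \<and> (concave_on {0..1} (\<lambda>x. f x + \<Phi> x) \<longrightarrow> concave_on {0..1} (bhat r n f))"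
proof -
  have slack: "rounding_slack n k + 2 * rounding_slack n (k + 1) + rounding_slack n (k + 2)
      \<le> second_diff (\<lambda>k. \<Phi> (real k / real n)) k" if k: "k + 2 \<le> n" for k
  proof -
    note le = rounding_slack_le[of n]
    consider "k = 0" | "1 \<le> k" "k + 2 = n" | "1 \<le> k" "k \<le> n - 3"
      using k by linarith
    then show ?thesis
    proof cases
      case 1
      with first le[of 1] le[of 2] show ?thesis
        by (simp add: second_diff_def numeral_2_eq_2)
    next
      case 2
      then have "n - 2 = k" "n - 1 = k + 1" by auto
      with 2 last[unfolded this] le[of k] le[of "k + 1"] show ?thesis
        by (simp add: second_diff_def)
    next
      case 3
      with middle[OF 3] le[of k] le[of "k + 1"] le[of "k + 2"] show ?thesis
        by (simp add: second_diff_def)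
    qed
  qed
  show ?thesis
    using convex_on_bhat[OF r f0 f1 slack] concave_on_bhat[OF r f0 f1 slack] by blast
qed

end
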